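(* Let $q$ be an odd prime power, and let $n,k,\ell$ be integers with $\ell\ge 0$ and $2\le k\le n-(\ell+1)$ (so $0\le \ell\le n-k-1$). Let $\boldsymbol{\alpha}=(\alpha_1,\dots,\alpha_n)\in\mathbb{F}_q^n$ with pairwise distinct entries, $\boldsymbol{v}=(v_1,\dots,v_n)\in(\mathbb{F}_q^{*})^n$, and $\boldsymbol{\eta}=(\eta_0,\dots,\eta_\ell)\in\mathbb{F}_q^{\ell+1}\setminus\{\boldsymbol 0\}$. Let $\mathcal{C}$ be the $( * )$-$(\mathcal{L},\mathcal{P})$-TGRS code defined in the context. Then the $(n-k)\times n$ matrix $\boldsymbol{H}$ whose $j$-th column ($1\le j\le n$) is $$\frac{u_j}{v_j}\Big(1,\ \alpha_j,\ \dots,\ \alpha_j^{\,n-k-(\ell+2)},\ \alpha_j^{\,n-k-(\ell+1)}-(-1)^{n-1}P_j\Omega_{\ell+1},\ \alpha_j^{\,n-k-\ell}-(-1)^{n-1}P_j\Omega_{\ell},\ \dots,\ \alpha_j^{\,n-k-1}-(-1)^{n-1}P_j\Omega_{1}\Big)^{T}$$ (i.e. rows $0,\dots,n-k-(\ell+2)$ are $(\frac{u_j}{v_j}\alpha_j^{i})_j$, and for $1\le r\le \ell+1$ the row indexed $n-k-r$ is $\big(\frac{u_j}{v_j}(\alpha_j^{\,n-k-r}-(-1)^{n-1}P_j\Omega_r)\big)_j$) is a parity-check matrix of $\mathcal{C}$; that is, $\operatorname{rank}\boldsymbol{H}=n-k$ and $\boldsymbol{G}\boldsymbol{H}^{T}=\boldsymbol{0}$,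 where $\boldsymbol{G}$ is the generator matrix of $\mathcal{C}$ given in the context. Here $$\Omega_r=\sum_{t=0}^{\ell}\eta_t\,S_{t+1-r}(\alpha_1,\dots,\alpha_n),\qquad 1\le r\le \ell+1.$$
   Context: $P_j=\prod_{i=1,i\neq j}^{n}\alpha_i$ and $P=\prod_{i=1}^n\alpha_i$; $u_j=\prod_{i=1,i\neq j}^{n}(\alpha_j-\alpha_i)^{-1}$ for $1\le j\le n$. For an integer $t$, $S_t(x_1,\dots,x_n)$ is the complete homogeneous symmetric polynomial of degree $t$: $S_t=0$ if $t<0$, and $S_t=\sum_{t_1+\dots+t_n=t,\ t_i\ge0}x_1^{t_1}\cdots x_n^{t_n}$ if $t\ge0$ (so $S_0=1$). The $( * )$-$(\mathcal{L},\mathcal{P})$-TGRS code is $\mathcal{C}=\{(v_1f(\alpha_1),\dots,v_nf(\alpha_n)) : f\in\mathcal{F}_{n,k,\boldsymbol\eta}\}$, where $\mathcal{F}_{n,k,\boldsymbol\eta}=\{\sum_{i=0}^{k-1}f_ix^i+f_0\sum_{j=0}^{\ell}\eta_jx^{k+j} : f_i\in\mathbb{F}_q\}$. Its generator matrix is the $k\times n$ matrix $\boldsymbol G$ whose first row is $\big(v_j(1+\sum_{t=0}^{\ell}\eta_t\alpha_j^{k+t})\big)_{j=1}^n$ and whose row $i$ ($1\le i\le k-1$) is $(v_j\alpha_j^{i})_{j=1}^n$. A parity-check matrix of a linear $[n,k]$ code is a full-rank $(n-k)\times n$ matrix whose null space is the code. *)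

theory Defs
  imports "Jordan_Normal_Form.DL_Rank_Submatrix"
begin

text \<open>Vectors of length n are functions on nat, indexed 0..n-1
  (entry i corresponds to the paper's index i+1).\<close>

definition complete_hom :: "int \<Rightarrow> nat \<Rightarrow> (nat \<Rightarrow> 'a::comm_ring_1) \<Rightarrow> 'a" where
  "complete_hom t n x =
     (if t < 0 then 0
      else \<Sum>e\<in>{e. e \<in> {0..<n} \<rightarrow>\<^sub>E {0..nat t} \<and> (\<Sum>i<n. e i) = nat t}.
             \<Prod>i<n. x i ^ e i)"

definition Pj :: "nat \<Rightarrow> (nat \<Rightarrow> 'a::field) \<Rightarrow> nat \<Rightarrow> 'a" where
  "Pj n \<alpha> j = (\<Prod>i\<in>{0..<n} - {j}. \<alpha> i)"

definition uj :: "nat \<Rightarrow> (nat \<Rightarrow> 'a::field) \<Rightarrow> nat \<Rightarrow> 'a" where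
  "uj n \<alpha> j = (\<Prod>i\<in>{0..<n} - {j}. inverse (\<alpha> j - \<alpha> i))"

definition Omega :: "nat \<Rightarrow> nat \<Rightarrow> (nat \<Rightarrow> 'a::field) \<Rightarrow> (nat \<Rightarrow> 'a) \<Rightarrow> nat \<Rightarrow> 'a" where
  "Omega n l \<alpha> \<eta> r = (\<Sum>t=0..l. \<eta> t * complete_hom (int t + 1 - int r) n \<alpha>)"

definition tgrs_G :: "nat \<Rightarrow> nat \<Rightarrow> nat \<Rightarrow> (nat \<Rightarrow> 'a::field) \<Rightarrow> (nat \<Rightarrow> 'a) \<Rightarrow> (nat \<Rightarrow> 'a) \<Rightarrow> 'a mat" where
  "tgrs_G n k l \<alpha> v \<eta> = mat k n (\<lambda>(i, j).
     if i = 0 then v j * (1 + (\<Sum>t=0..l. \<eta> t * \<alpha> j ^ (k + t)))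
     else v j * \<alpha> j ^ i)"

definition tgrs_H :: "nat \<Rightarrow> nat \<Rightarrow> nat \<Rightarrow> (nat \<Rightarrow> 'a::field) \<Rightarrow> (nat \<Rightarrow> 'a) \<Rightarrow> (nat \<Rightarrow> 'a) \<Rightarrow> 'a mat" where
  "tgrs_H n k l \<alpha> v \<eta> = mat (n - k) n (\<lambda>(i, j).
     uj n \<alpha> j / v j *
     (if i < n - k - (l + 1) then \<alpha> j ^ i
      else \<alpha> j ^ i - (-1) ^ (n - 1) * Pj n \<alpha> j * Omega n l \<alpha> \<eta> (n - k - i)))"

end

theory Submission
  imports Defs
begin

(* The u_j are the weights of Lagrange interpolation at the distinct nodes alpha_j, so
   sigma_m = sum_j u_j alpha_j^m is the divided difference of x^m: it vanishes for m < n - 1,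
   equals 1 for m = n - 1 and equals S_(m-n+1)(alpha) beyond, since both sides obey the
   recursion obtained by removing one node. Moreover sum_j u_j P_j = (-1)^(n-1), while
   sum_j u_j P_j alpha_j^m = P sigma_(m-1) = 0 for 0 < m < n.
   In an entry of G H^T the v_j cancel and only such sums remain. The twisted row 0 of G
   contributes sum_t eta_t sigma_(k+t+i) against row i of H; this is Omega_(n-k-i) on the last
   l + 1 rows and 0 on the others, and it is cancelled exactly by the correction terms
   -(-1)^(n-1) P_j Omega_r. For the rank, H times the n x (n-k) matrix (v_j alpha_j^(n-1-m))
   is lower unitriangular. *)

section \<open>Divided differences of powers\<close>

definition lagrange_weight :: "nat set \<Rightarrow> (nat \<Rightarrow> 'a::field) \<Rightarrow> nat \<Rightarrow> 'a" where
  "lagrange_weight A \<alpha> j = (\<Prod>i\<in>A - {j}. inverse (\<alpha> j - \<alpha> i))"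

definition divdiff_power :: "nat set \<Rightarrow> (nat \<Rightarrow> 'a::field) \<Rightarrow> nat \<Rightarrow> 'a" where
  "divdiff_power A \<alpha> m = (\<Sum>j\<in>A. \<alpha> j ^ m * lagrange_weight A \<alpha> j)"

lemma lagrange_weight_remove:
  assumes "finite A" "p \<in> A" "j \<in> A" "j \<noteq> p"
  shows "lagrange_weight A \<alpha> j = lagrange_weight (A - {p}) \<alpha> j * inverse (\<alpha> j - \<alpha> p)"
proof -
  have "A - {j} = insert p (A - {p} - {j})" using assms by auto
  then show ?thesis
    unfolding lagrange_weight_def using assms by (simp add: mult.commute)
qed

lemma divdiff_power_Suc:
  assumes "finite A" "p \<in> A" "inj_on \<alpha> A"
  shows "divdiff_power A \<alpha> (Suc m) = divdiff_power (A - {p}) \<alpha> m + \<alpha> p * divdiff_power A \<alpha> m"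
proof -
  have "divdiff_power A \<alpha> (Suc m) - \<alpha> p * divdiff_power A \<alpha> m
      = (\<Sum>j\<in>A. \<alpha> j ^ m * ((\<alpha> j - \<alpha> p) * lagrange_weight A \<alpha> j))"
    unfolding divdiff_power_def
    by (simp add: sum_distrib_left sum_subtractf[symmetric] algebra_simps)
  also have "\<dots> = (\<Sum>j\<in>A - {p}. \<alpha> j ^ m * ((\<alpha> j - \<alpha> p) * lagrange_weight A \<alpha> j))"
    using assms by (simp add: sum.remove)
  also have "\<dots> = divdiff_power (A - {p}) \<alpha> m"
    unfolding divdiff_power_def
  proof (rule sum.cong)
    fix j assume j: "j \<in> A - {p}"
    then have "\<alpha> j \<noteq> \<alpha> p" using assms inj_onD by fastforce
    then show "\<alpha> j ^ m * ((\<alpha> j - \<alpha> p) * lagrange_weight A \<alpha> j)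
        = \<alpha> j ^ m * lagrange_weight (A - {p}) \<alpha> j"
      using lagrange_weight_remove[OF assms(1,2), of j \<alpha>] j by simp
  qed simp
  finally show ?thesis by (simp add: algebra_simps)
qed

lemma divdiff_power_below_card:
  assumes "finite A" "card A = Suc N" "inj_on \<alpha> A" "m \<le> N"
  shows "divdiff_power A \<alpha> m = (if m = N then 1 else 0)"
  using assms
proof (induction N arbitrary: A m)
  case 0
  then obtain a where "A = {a}" by (auto simp: card_Suc_eq)
  then show ?case using 0 by (simp add: divdiff_power_def lagrange_weight_def)
next
  case (Suc N)
  obtain p B where pB: "A = insert p B" "p \<notin> B" "card B = Suc N"
    using Suc.prems(2) card_Suc_eq by metis
  then obtain q where "q \<in> B" by fastforce
  then have pq: "p \<in> A" "q \<in> A" "p \<noteq> q" using pB by auto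
  have IH: "divdiff_power (A - {x}) \<alpha> m = (if m = N then 1 else 0)" if "x \<in> A" "m \<le> N" for x m
    using Suc.IH[of "A - {x}" m] Suc.prems(1-3) that inj_on_subset[OF Suc.prems(3), of "A - {x}"]
    by auto
  note step = divdiff_power_Suc[OF Suc.prems(1) _ Suc.prems(3)]
  \<comment> \<open>Removing either of two distinct nodes gives the same smaller divided difference,
    so \<open>(\<alpha> p - \<alpha> q) * divdiff_power A \<alpha> m = 0\<close>.\<close>
  have low: "divdiff_power A \<alpha> m = 0" if "m \<le> N" for m
  proof -
    have "\<alpha> p * divdiff_power A \<alpha> m = \<alpha> q * divdiff_power A \<alpha> m"
      using step[OF pq(1), of m] step[OF pq(2), of m] IH[OF pq(1) that] IH[OF pq(2) that]
      by (metis add_left_cancel)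
    moreover have "\<alpha> p \<noteq> \<alpha> q" using Suc.prems(3) pq inj_onD by fastforce
    ultimately show ?thesis by simp
  qed
  show ?case
  proof (cases "m = Suc N")
    case True
    then show ?thesis using step[OF pq(1), of N] low[of N] IH[OF pq(1), of N] by simp
  next
    case False
    then show ?thesis using low Suc.prems(4) by simp
  qed
qed

lemma divdiff_power_eq_0:
  assumes "inj_on \<alpha> {0..<n}" "Suc m < n"
  shows "divdiff_power {0..<n} \<alpha> m = 0"
  using divdiff_power_below_card[OF _ _ assms(1), of "n - 1" m] assms(2) by simp

lemma divdiff_power_top:
  assumes "inj_on \<alpha> {0..<n}" "0 < n"
  shows "divdiff_power {0..<n} \<alpha> (n - 1) = 1"
  using divdiff_power_below_card[OF _ _ assms(1), of "n - 1" "n - 1"] assms(2) by simp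

lemma sum_lagrange_weight_prod_others:
  assumes "finite A" "card A = Suc N" "inj_on \<alpha> A"
  shows "(\<Sum>j\<in>A. lagrange_weight A \<alpha> j * (\<Prod>i\<in>A - {j}. \<alpha> i)) = (-1) ^ N"
  using assms
proof (induction N arbitrary: A)
  case 0
  then obtain a where "A = {a}" by (auto simp: card_Suc_eq)
  then show ?case by (simp add: lagrange_weight_def)
next
  case (Suc N)
  then obtain p where p: "p \<in> A" by fastforce
  let ?w = "lagrange_weight A \<alpha>" and ?w' = "lagrange_weight (A - {p}) \<alpha>"
  have IH: "(\<Sum>j\<in>A - {p}. ?w' j * (\<Prod>i\<in>A - {p} - {j}. \<alpha> i)) = (-1) ^ N"
    using Suc.IH[of "A - {p}"] Suc.prems p by (auto intro: inj_on_subset)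
  have sum_w: "(\<Sum>j\<in>A - {p}. ?w j) = - ?w p"
    using divdiff_power_below_card[OF Suc.prems, of 0] Suc.prems(1) p
    by (simp add: divdiff_power_def sum.remove eq_neg_iff_add_eq_0 add.commute)
  \<comment> \<open>Partial fractions: \<open>\<alpha> p / (\<alpha> j - \<alpha> p) = \<alpha> j / (\<alpha> j - \<alpha> p) - 1\<close>.\<close>
  have partial_fraction: "?w j * (\<Prod>i\<in>A - {j}. \<alpha> i)
      = ?w j * (\<Prod>i\<in>A - {p}. \<alpha> i) - ?w' j * (\<Prod>i\<in>A - {p} - {j}. \<alpha> i)"
    if j: "j \<in> A - {p}" for j
  proof -
    have "\<alpha> j \<noteq> \<alpha> p" using j p Suc.prems(3) inj_onD by fastforce
    then have w: "?w' j = (\<alpha> j - \<alpha> p) * ?w j"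
      using lagrange_weight_remove[OF Suc.prems(1) p, of j \<alpha>] j by simp
    have "A - {j} = insert p (A - {p} - {j})" using j p by auto
    then have "(\<Prod>i\<in>A - {j}. \<alpha> i) = \<alpha> p * (\<Prod>i\<in>A - {p} - {j}. \<alpha> i)"
      using Suc.prems(1) by simp
    moreover have "(\<Prod>i\<in>A - {p}. \<alpha> i) = \<alpha> j * (\<Prod>i\<in>A - {p} - {j}. \<alpha> i)"
      using Suc.prems(1) j by (simp add: prod.remove)
    ultimately show ?thesis by (simp add: w algebra_simps)
  qed
  have "(\<Sum>j\<in>A. ?w j * (\<Prod>i\<in>A - {j}. \<alpha> i))
      = ?w p * (\<Prod>i\<in>A - {p}. \<alpha> i) + (\<Sum>j\<in>A - {p}. ?w j * (\<Prod>i\<in>A - {j}. \<alpha> i))"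
    using Suc.prems(1) p by (simp add: sum.remove)
  also have "(\<Sum>j\<in>A - {p}. ?w j * (\<Prod>i\<in>A - {j}. \<alpha> i))
      = (\<Sum>j\<in>A - {p}. ?w j) * (\<Prod>i\<in>A - {p}. \<alpha> i) - (-1) ^ N"
    by (simp add: partial_fraction sum_subtractf sum_distrib_right IH)
  finally show ?case by (simp add: sum_w)
qed

section \<open>Complete homogeneous symmetric polynomials\<close>

definition weak_compositions :: "nat \<Rightarrow> nat \<Rightarrow> (nat \<Rightarrow> nat) set" where
  "weak_compositions n s = {e \<in> {0..<n} \<rightarrow>\<^sub>E {0..s}. (\<Sum>i<n. e i) = s}"

lemma finite_weak_compositions: "finite (weak_compositions n s)"
  unfolding weak_compositions_def
  by (rule finite_subset[of _ "{0..<n} \<rightarrow>\<^sub>E {0..s}"]) (auto intro: finite_PiE)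

lemma complete_hom_of_nat:
  "complete_hom (int s) n x = (\<Sum>e\<in>weak_compositions n s. \<Prod>i<n. x i ^ e i)"
  unfolding complete_hom_def weak_compositions_def by simp

lemma complete_hom_no_vars: "complete_hom (int s) 0 x = (if s = 0 then 1 else 0)"
  unfolding complete_hom_of_nat weak_compositions_def by (auto simp: PiE_empty_domain)

lemma complete_hom_Suc_vars:
  "complete_hom (int s) (Suc n) x = (\<Sum>a=0..s. x n ^ a * complete_hom (int (s - a)) n x)"
proof -
  let ?T = "SIGMA a:{0..s}. weak_compositions n (s - a)"
  have "(\<Sum>e\<in>weak_compositions (Suc n) s. \<Prod>i<Suc n. x i ^ e i)
      = (\<Sum>(a, e)\<in>?T. x n ^ a * (\<Prod>i<n. x i ^ e i))"
  proof (rule sum.reindex_bij_witness[where j = "\<lambda>e. (e n, e(n := undefined))"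
        and i = "\<lambda>(a, e). e(n := a)"])
    fix e assume e: "e \<in> weak_compositions (Suc n) s"
    then have sum: "(\<Sum>i<n. e i) + e n = s" by (simp add: weak_compositions_def)
    have "e i \<le> s - e n" if "i < n" for i
      using member_le_sum[of i "{..<n}" e] that sum by simp
    then show "(e n, e(n := undefined)) \<in> ?T"
      using e sum by (auto simp: weak_compositions_def PiE_def extensional_def)
  next
    fix b assume "b \<in> ?T"
    then obtain a e where b: "b = (a, e)" "a \<le> s" "e \<in> weak_compositions n (s - a)" by auto
    then have "e n = undefined" by (auto simp: weak_compositions_def PiE_def extensional_def)
    then show "(\<lambda>e. (e n, e(n := undefined))) ((\<lambda>(a, e). e(n := a)) b) = b" using b by auto
    show "(\<lambda>(a, e). e(n := a)) b \<in> weak_compositions (Suc n) s"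
      using b by (auto simp: weak_compositions_def PiE_def extensional_def Pi_def less_Suc_eq)
  qed (auto simp: mult.commute)
  also have "\<dots> = (\<Sum>a=0..s. \<Sum>e\<in>weak_compositions n (s - a). x n ^ a * (\<Prod>i<n. x i ^ e i))"
    by (rule sum.Sigma[symmetric]) (auto simp: finite_weak_compositions)
  finally show ?thesis unfolding complete_hom_of_nat by (simp add: sum_distrib_left)
qed

lemma complete_hom_0: "complete_hom 0 n x = 1"
proof (induction n)
  case 0
  then show ?case using complete_hom_no_vars[of 0] by simp
next
  case (Suc n)
  then show ?case using complete_hom_Suc_vars[of 0 n x] by simp
qed

lemma complete_hom_Suc_Suc_vars:
  "complete_hom (int (Suc s)) (Suc n) x
     = complete_hom (int (Suc s)) n x + x n * complete_hom (int s) (Suc n) x"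
proof -
  have "complete_hom (int (Suc s)) (Suc n) x
      = complete_hom (int (Suc s)) n x + (\<Sum>a=0..s. x n ^ Suc a * complete_hom (int (s - a)) n x)"
    unfolding complete_hom_Suc_vars[of "Suc s"] sum.atLeast0_atMost_Suc_shift by simp
  also have "\<dots> = complete_hom (int (Suc s)) n x + x n * complete_hom (int s) (Suc n) x"
    unfolding complete_hom_Suc_vars[of s] by (simp add: sum_distrib_left mult.assoc)
  finally show ?thesis .
qed

lemma divdiff_power_eq_complete_hom:
  assumes "inj_on \<alpha> {0..<n}"
  shows "divdiff_power {0..<n} \<alpha> (n + s) = complete_hom (int (Suc s)) n \<alpha>"
  using assms
proof (induction n arbitrary: s)
  case 0
  then show ?case using complete_hom_no_vars[of "Suc s"] by (simp add: divdiff_power_def)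
next
  case (Suc n)
  have prev: "inj_on \<alpha> {0..<n}" using Suc.prems by (rule inj_on_subset) auto
  have step: "divdiff_power {0..<Suc n} \<alpha> (Suc m)
      = divdiff_power {0..<n} \<alpha> m + \<alpha> n * divdiff_power {0..<Suc n} \<alpha> m" for m
    using divdiff_power_Suc[OF _ _ Suc.prems, of n m] by (simp add: atLeast0_lessThan_Suc)
  have IH: "divdiff_power {0..<n} \<alpha> (n + s) = complete_hom (int (Suc s)) n \<alpha>" for s
    using Suc.IH[OF prev] .
  have "divdiff_power {0..<Suc n} \<alpha> (n + s) = complete_hom (int s) (Suc n) \<alpha>" for s
  proof (induction s)
    case 0
    then show ?case
      using divdiff_power_top[OF Suc.prems] by (simp add: complete_hom_0)
  next
    case (Suc s)
    then show ?case using step[of "n + s"] IH[of s] complete_hom_Suc_Suc_vars[of s n \<alpha>] by simp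
  qed
  from this[of "Suc s"] show ?case by simp
qed

lemma divdiff_power_eq_complete_hom_int:
  assumes "inj_on \<alpha> {0..<n}" "1 \<le> r" "r \<le> n"
  shows "divdiff_power {0..<n} \<alpha> (n + t - r) = complete_hom (int t + 1 - int r) n \<alpha>"
proof -
  consider "r \<le> t" | "r = Suc t" | "Suc t < r" by linarith
  then show ?thesis
  proof cases
    case 1
    then have "n + t - r = n + (t - r)" "int t + 1 - int r = int (Suc (t - r))" by auto
    then show ?thesis using divdiff_power_eq_complete_hom[OF assms(1), of "t - r"] by presburger
  next
    case 2
    then show ?thesis using divdiff_power_top[OF assms(1)] assms(2,3) by (simp add: complete_hom_0)
  next
    case 3
    then show ?thesis using divdiff_power_eq_0[OF assms(1)] assms(3) by (simp add: complete_hom_def)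
  qed
qed

section \<open>The generator and parity-check matrices\<close>

lemma (in vec_space) full_rank_if_det_mult_nonzero:
  assumes A: "A \<in> carrier_mat n nc" and C: "C \<in> carrier_mat nc n" and "det (A * C) \<noteq> 0"
  shows "rank A = n"
proof -
  obtain D where D: "D \<in> carrier_mat n n" "(A * C) * D = 1\<^sub>m n"
    using det_non_zero_imp_unit[of "A * C" n] assms unfolding Units_def ring_mat_def by auto
  have cols: "set (cols A) \<subseteq> carrier_vec n" using A cols_dim by blast
  have image: "A *\<^sub>v x \<in> span (set (cols A))" if x: "x \<in> carrier_vec nc" for x
  proof -
    have "lincomb_list (\<lambda>i. x $ i) (cols A)
        = mat_of_cols n (cols A) *\<^sub>v vec (length (cols A)) (\<lambda>i. x $ i)"
      by (rule lincomb_list_as_mat_mult) (use cols in auto)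
    moreover have "mat_of_cols n (cols A) = A" "vec (length (cols A)) (\<lambda>i. x $ i) = x"
      using A x mat_of_cols_cols[of A] by (auto intro!: eq_vecI)
    ultimately have "A *\<^sub>v x = lincomb_list (\<lambda>i. x $ i) (cols A)" by simp
    then show ?thesis
      using in_span_listI[where c = "\<lambda>i. x $ i"] span_list_as_span[OF cols] by auto
  qed
  have "y \<in> span (set (cols A))" if y: "y \<in> carrier_vec n" for y
  proof -
    have "y = (A * C * D) *\<^sub>v y" using D y by simp
    also have "\<dots> = (A * C) *\<^sub>v (D *\<^sub>v y)"
      by (rule assoc_mult_mat_vec) (use A C D y in auto)
    also have "\<dots> = A *\<^sub>v (C *\<^sub>v (D *\<^sub>v y))"
      by (rule assoc_mult_mat_vec) (use A C D y in auto)
    finally show ?thesis using image C D y by (metis mult_mat_vec_carrier)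
  qed
  then have "span (set (cols A)) = carrier_vec n" using span_closed[OF cols] by auto
  then have "rank A = vectorspace.dim class_ring (vs (carrier_vec n))" unfolding rank_def by simp
  also have "vs (carrier_vec n) = V" using carrier_vs_is_self by simp
  finally show ?thesis using dim_is_n by simp
qed

lemma sum_power_uj: "(\<Sum>j=0..<n. \<alpha> j ^ m * uj n \<alpha> j) = divdiff_power {0..<n} \<alpha> m"
  by (simp add: divdiff_power_def uj_def lagrange_weight_def)

lemma sum_uj_Pj:
  assumes "inj_on \<alpha> {0..<n}" "0 < n"
  shows "(\<Sum>j=0..<n. uj n \<alpha> j * Pj n \<alpha> j) = (-1) ^ (n - 1)"
  using sum_lagrange_weight_prod_others[OF _ _ assms(1), of "n - 1"] assms(2)
  by (simp add: uj_def Pj_def lagrange_weight_def)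

lemma sum_power_Pj_uj_eq_0:
  assumes "inj_on \<alpha> {0..<n}" "0 < m" "m < n"
  shows "(\<Sum>j=0..<n. \<alpha> j ^ m * Pj n \<alpha> j * uj n \<alpha> j) = 0"
proof -
  have "\<alpha> j ^ m * Pj n \<alpha> j = (\<Prod>i=0..<n. \<alpha> i) * \<alpha> j ^ (m - 1)" if "j < n" for j
    using that assms(2) by (cases m) (simp_all add: Pj_def prod.remove)
  then have "(\<Sum>j=0..<n. \<alpha> j ^ m * Pj n \<alpha> j * uj n \<alpha> j)
      = (\<Prod>i=0..<n. \<alpha> i) * divdiff_power {0..<n} \<alpha> (m - 1)"
    by (simp add: sum_power_uj[symmetric] sum_distrib_left mult.assoc)
  then show ?thesis using divdiff_power_eq_0[OF assms(1), of "m - 1"] assms(2,3) by simp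
qed

definition Omega_row :: "nat \<Rightarrow> nat \<Rightarrow> nat \<Rightarrow> (nat \<Rightarrow> 'a::field) \<Rightarrow> (nat \<Rightarrow> 'a) \<Rightarrow> nat \<Rightarrow> 'a" where
  "Omega_row n k l \<alpha> \<eta> i = (if i < n - k - (l + 1) then 0 else Omega n l \<alpha> \<eta> (n - k - i))"

definition tgrs_H_unscaled ::
    "nat \<Rightarrow> nat \<Rightarrow> nat \<Rightarrow> (nat \<Rightarrow> 'a::field) \<Rightarrow> (nat \<Rightarrow> 'a) \<Rightarrow> nat \<Rightarrow> nat \<Rightarrow> 'a" where
  "tgrs_H_unscaled n k l \<alpha> \<eta> i j =
     uj n \<alpha> j * (\<alpha> j ^ i - (-1) ^ (n - 1) * Pj n \<alpha> j * Omega_row n k l \<alpha> \<eta> i)"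

definition tgrs_G_unscaled :: "nat \<Rightarrow> nat \<Rightarrow> (nat \<Rightarrow> 'a::field) \<Rightarrow> (nat \<Rightarrow> 'a) \<Rightarrow> nat \<Rightarrow> nat \<Rightarrow> 'a" where
  "tgrs_G_unscaled k l \<eta> \<alpha> i j = (if i = 0 then 1 + (\<Sum>t=0..l. \<eta> t * \<alpha> j ^ (k + t)) else \<alpha> j ^ i)"

lemma tgrs_H_index:
  "i < n - k \<Longrightarrow> j < n \<Longrightarrow> tgrs_H n k l \<alpha> v \<eta> $$ (i, j) = tgrs_H_unscaled n k l \<alpha> \<eta> i j / v j"
  by (simp add: tgrs_H_def tgrs_H_unscaled_def Omega_row_def)

lemma tgrs_G_index:
  "i < k \<Longrightarrow> j < n \<Longrightarrow> tgrs_G n k l \<alpha> v \<eta> $$ (i, j) = v j * tgrs_G_unscaled k l \<eta> \<alpha> i j"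
  by (simp add: tgrs_G_def tgrs_G_unscaled_def)

lemma sum_power_mult_tgrs_H_unscaled:
  "(\<Sum>j=0..<n. \<alpha> j ^ m * tgrs_H_unscaled n k l \<alpha> \<eta> i j)
     = divdiff_power {0..<n} \<alpha> (m + i)
       - (-1) ^ (n - 1) * Omega_row n k l \<alpha> \<eta> i * (\<Sum>j=0..<n. \<alpha> j ^ m * Pj n \<alpha> j * uj n \<alpha> j)"
  unfolding tgrs_H_unscaled_def sum_power_uj[symmetric]
  by (simp add: sum_subtractf sum_distrib_left algebra_simps power_add)

lemma sum_eta_divdiff_power_eq_Omega_row:
  assumes "inj_on \<alpha> {0..<n}" "k + l + 1 \<le> n" "i < n - k"
  shows "(\<Sum>t=0..l. \<eta> t * divdiff_power {0..<n} \<alpha> (k + t + i)) = Omega_row n k l \<alpha> \<eta> i"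
proof (cases "i < n - k - (l + 1)")
  case True
  then show ?thesis
    using divdiff_power_eq_0[OF assms(1)] by (simp add: Omega_row_def)
next
  case False
  define r where "r = n - k - i"
  have r: "1 \<le> r" "r \<le> n" using assms(2,3) False unfolding r_def by auto
  have "divdiff_power {0..<n} \<alpha> (k + t + i) = complete_hom (int t + 1 - int r) n \<alpha>" for t
    using divdiff_power_eq_complete_hom_int[OF assms(1) r, of t] assms(3) unfolding r_def
    by (simp add: add.commute add.left_commute)
  moreover have "Omega_row n k l \<alpha> \<eta> i = Omega n l \<alpha> \<eta> r"
    using False by (simp add: Omega_row_def r_def)
  ultimately show ?thesis by (simp add: Omega_def)
qed

lemma sum_tgrs_G_H_unscaled_eq_0:
  assumes inj: "inj_on \<alpha> {0..<n}" and "0 < k" "k + l + 1 \<le> n" "i < k" "i' < n - k"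
  shows "(\<Sum>j=0..<n. tgrs_G_unscaled k l \<eta> \<alpha> i j * tgrs_H_unscaled n k l \<alpha> \<eta> i' j) = 0"
proof -
  let ?h = "tgrs_H_unscaled n k l \<alpha> \<eta> i'" and ?w = "Omega_row n k l \<alpha> \<eta> i'"
  have moment: "(\<Sum>j=0..<n. \<alpha> j ^ m * ?h j) = divdiff_power {0..<n} \<alpha> (m + i')"
    if "0 < m" "m < n" for m
    using sum_power_mult_tgrs_H_unscaled[of \<alpha> m n k l \<eta> i'] sum_power_Pj_uj_eq_0[OF inj that]
    by simp
  show ?thesis
  proof (cases "i = 0")
    case True
    have "(\<Sum>j=0..<n. ?h j) = - ?w"
      using sum_power_mult_tgrs_H_unscaled[of \<alpha> 0 n k l \<eta> i'] sum_uj_Pj[OF inj]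
        divdiff_power_eq_0[OF inj, of i'] assms
      by (simp add: mult.commute[of "uj n \<alpha> _"] power_add[symmetric])
    moreover have "(\<Sum>t=0..l. \<eta> t * (\<Sum>j=0..<n. \<alpha> j ^ (k + t) * ?h j)) = ?w"
      using moment[of "k + _"] sum_eta_divdiff_power_eq_Omega_row[OF inj, of k l i' \<eta>] assms
      by (simp add: add.assoc)
    ultimately show ?thesis
      using True by (simp add: tgrs_G_unscaled_def distrib_right sum.distrib sum_distrib_left
          sum_distrib_right sum.swap[of _ "{0..l}"] mult.assoc)
  next
    case False
    then show ?thesis
      using moment[of i] divdiff_power_eq_0[OF inj, of "i + i'"] assms
      by (simp add: tgrs_G_unscaled_def)
  qed
qed

lemma tgrs_G_mult_H_transpose:
  assumes inj: "inj_on \<alpha> {0..<n}" and v: "\<forall>j<n. v j \<noteq> 0" and "0 < k" "k + l + 1 \<le> n"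
  shows "tgrs_G n k l \<alpha> v \<eta> * (tgrs_H n k l \<alpha> v \<eta>)\<^sup>T = 0\<^sub>m k (n - k)"
proof (rule eq_matI)
  fix i i' assume "i < dim_row (0\<^sub>m k (n - k))" "i' < dim_col (0\<^sub>m k (n - k))"
  then have i: "i < k" and i': "i' < n - k" by simp_all
  have "(tgrs_G n k l \<alpha> v \<eta> * (tgrs_H n k l \<alpha> v \<eta>)\<^sup>T) $$ (i, i')
      = (\<Sum>j=0..<n. tgrs_G n k l \<alpha> v \<eta> $$ (i, j) * tgrs_H n k l \<alpha> v \<eta> $$ (i', j))"
    using i i' by (simp add: tgrs_G_def tgrs_H_def scalar_prod_def)
  also have "\<dots> = (\<Sum>j=0..<n. tgrs_G_unscaled k l \<eta> \<alpha> i j * tgrs_H_unscaled n k l \<alpha> \<eta> i' j)"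
    using i i' v by (intro sum.cong) (simp_all add: tgrs_G_index tgrs_H_index)
  also have "\<dots> = 0" using sum_tgrs_G_H_unscaled_eq_0[OF inj assms(3,4) i i'] .
  finally show "(tgrs_G n k l \<alpha> v \<eta> * (tgrs_H n k l \<alpha> v \<eta>)\<^sup>T) $$ (i, i') = 0\<^sub>m k (n - k) $$ (i, i')"
    using i i' by simp
qed (simp_all add: tgrs_G_def tgrs_H_def)

lemma rank_tgrs_H:
  assumes inj: "inj_on \<alpha> {0..<n}" and v: "\<forall>j<n. v j \<noteq> 0" and "0 < k" "k \<le> n"
  shows "vec_space.rank (n - k) (tgrs_H n k l \<alpha> v \<eta>) = n - k"
proof -
  let ?H = "tgrs_H n k l \<alpha> v \<eta>"
  define R where "R = mat n (n - k) (\<lambda>(j, m). v j * \<alpha> j ^ (n - 1 - m))"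
  have H: "?H \<in> carrier_mat (n - k) n" and R: "R \<in> carrier_mat n (n - k)"
    by (simp_all add: tgrs_H_def R_def)
  have HR: "(?H * R) $$ (i, m) = divdiff_power {0..<n} \<alpha> (n - 1 - m + i)"
    if i: "i < n - k" and m: "m < n - k" for i m
  proof -
    have "(?H * R) $$ (i, m) = (\<Sum>j=0..<n. \<alpha> j ^ (n - 1 - m) * tgrs_H_unscaled n k l \<alpha> \<eta> i j)"
      using i m v H R by (auto simp: scalar_prod_def tgrs_H_index R_def intro!: sum.cong)
    then show ?thesis
      using sum_power_mult_tgrs_H_unscaled[of \<alpha> "n - 1 - m" n k l \<eta> i]
        sum_power_Pj_uj_eq_0[OF inj, of "n - 1 - m"] m assms(3)
      by simp
  qed
  have "det (?H * R) = prod_list (diag_mat (?H * R))"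
  proof (rule det_lower_triangular)
    fix i m assume "i < m" "m < n - k"
    then show "(?H * R) $$ (i, m) = 0" using HR divdiff_power_eq_0[OF inj] by simp
  qed (use H R in simp)
  also have "diag_mat (?H * R) = replicate (n - k) 1"
    using H R HR divdiff_power_top[OF inj] assms(3,4)
    by (auto intro!: nth_equalityI simp: diag_mat_def)
  finally show ?thesis
    using vec_space.full_rank_if_det_mult_nonzero[OF H R] by simp
qed

theorem theorem3p1:
  fixes n k l :: nat
    and \<alpha> v \<eta> :: "nat \<Rightarrow> 'a::{finite, field}"
  assumes q_odd: "odd (card (UNIV :: 'a set))"
    and k_ge: "2 \<le> k"
    and k_le: "k \<le> n - (l + 1)"
    and l_le: "l + 1 \<le> n"
    and \<alpha>_distinct: "inj_on \<alpha> {0..<n}"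
    and v_nz: "\<forall>j<n. v j \<noteq> 0"
    and \<eta>_nz: "\<exists>t\<le>l. \<eta> t \<noteq> 0"
  shows "vec_space.rank (n - k) (tgrs_H n k l \<alpha> v \<eta>) = n - k
       \<and> tgrs_G n k l \<alpha> v \<eta> * (tgrs_H n k l \<alpha> v \<eta>)\<^sup>T = 0\<^sub>m k (n - k)"
proof -
  have "0 < k" "k + l + 1 \<le> n" using k_ge k_le l_le by auto
  then show ?thesis
    using rank_tgrs_H[OF \<alpha>_distinct v_nz] tgrs_G_mult_H_transpose[OF \<alpha>_distinct v_nz] by simp
qed

end
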